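(* Let $(Z,d)$ be an infinite compact metric space and $\Gamma$ a regular approximation graph for $Z$ with refining sequence $(\mathcal V_n)_{n\ge0}$. Then $$\mathcal I_\Gamma=\pi_\Gamma^{-1}\Big(\bigcap_{n\in\mathbb N}\bigcup\mathcal V_n^{\mathrm{ess}}\Big).$$
   Context: A refining sequence is a sequence $(\mathcal V_n)_{n\ge0}$ of finite covers of $Z$, all open or all closed with nonempty interiors, with $\mathcal V_0=\{Z\}$, each element of $\mathcal V_{n+1}$ contained in some element of $\mathcal V_n$, and $\max_{v\in\mathcal V_n}\operatorname{diam}v\to0$. Its approximation graph $\Gamma$ has vertices $\coprod_n\mathcal V_n$ and an edge from $v_n\in\mathcal V_n$ to $v_{n+1}\in\mathcal V_{n+1}$ whenever $v_{n+1}\subset v_n$. The infinite path space $\mathcal P_\Gamma$ is the set of sequences of edges $(p_n)_{n\ge0}$, $p_n$ from some $v_n\in\mathcal V_n$ to some $v_{n+1}\in\mathcal V_{n+1}$, consecutive edges sharing their common vertex; it carries the compact topology generated by cylinder sets (paths with prescribed first finitely many edges). Writing $r(p_n)=v_{n+1}$, the map $\pi_\Gamma:\mathcal P_\Gamma\to Z$ is $\pi_\Gamma(\tilde p)=$ the unique point of $\bigcap_{n\ge0}\operatorname{cl}(r(p_n))$; it is continuous and surjective. $\mathcal I_\Gamma=\{\tilde p\in\mathcal P_\Gamma:\#\pi_\Gamma^{-1}(\pi_\Gamma(\tilde p))=1\}$. The overlapping set is $\mathcal Y_n=\{\operatorname{cl}(v)\cap\operatorname{cl}(w):v\ne w\in\mathcal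 V_n\}$, and $v^{\mathrm{ess}}=\operatorname{int}(v)\setminus\bigcup\mathcal Y_n$ for $v\in\mathcal V_n$, $\mathcal V_n^{\mathrm{ess}}=\{v^{\mathrm{ess}}:v\in\mathcal V_n\}$. $\Gamma$ is regular if for every $n\in\mathbb N$ and $v\in\mathcal V_n$: $v=\bigcup\{w\in\mathcal V_{n+1}:w\subset v\}$ and $v^{\mathrm{ess}}\ne\varnothing$. *)

theory Defs
  imports "HOL-Analysis.Analysis"
begin

text \<open>The compact metric space Z is the whole type 'a (so open, closed, interior,
 closure are the topology of Z). A refining sequence is V :: nat => 'a set set.\<close>

definition refining_sequence :: "(nat \<Rightarrow> 'a::metric_space set set) \<Rightarrow> bool" where
  "refining_sequence V \<longleftrightarrow>
     (\<forall>n. finite (V n) \<and> \<Union>(V n) = UNIV) \<and>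
     ((\<forall>n. \<forall>v\<in>V n. open v) \<or> (\<forall>n. \<forall>v\<in>V n. closed v \<and> interior v \<noteq> {})) \<and>
     V 0 = {UNIV} \<and>
     (\<forall>n. \<forall>w\<in>V (Suc n). \<exists>v\<in>V n. w \<subseteq> v) \<and>
     (\<lambda>n. Max (diameter ` V n)) \<longlonglongrightarrow> 0"

text \<open>Vertices of the approximation graph at level n are the elements of V n; an edge
 from level n to level n+1 is a pair (v, w) with v in V n, w in V (n+1), w a subset of v.\<close>

definition is_edge :: "(nat \<Rightarrow> 'a set set) \<Rightarrow> nat \<Rightarrow> 'a set \<times> 'a set \<Rightarrow> bool" where
  "is_edge V n e \<longleftrightarrow> fst e \<in> V n \<and> snd e \<in> V (Suc n) \<and> snd e \<subseteq> fst e"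

definition path_space :: "(nat \<Rightarrow> 'a set set) \<Rightarrow> (nat \<Rightarrow> 'a set \<times> 'a set) set" where
  "path_space V = {p. (\<forall>n. is_edge V n (p n)) \<and> (\<forall>n. snd (p n) = fst (p (Suc n)))}"

definition path_proj :: "(nat \<Rightarrow> 'a::topological_space set \<times> 'a set) \<Rightarrow> 'a" where
  "path_proj p = (THE z. z \<in> (\<Inter>n. closure (snd (p n))))"

definition injectivity_set :: "(nat \<Rightarrow> 'a::topological_space set set) \<Rightarrow> (nat \<Rightarrow> 'a set \<times> 'a set) set" where
  "injectivity_set V = {p \<in> path_space V.
      card {q \<in> path_space V. path_proj q = path_proj p} = 1}"

definition overlapping_set :: "(nat \<Rightarrow> 'a::topological_space set set) \<Rightarrow> nat \<Rightarrow> 'a set set" where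
  "overlapping_set V n = {closure v \<inter> closure w | v w. v \<in> V n \<and> w \<in> V n \<and> v \<noteq> w}"

definition ess :: "(nat \<Rightarrow> 'a::topological_space set set) \<Rightarrow> nat \<Rightarrow> 'a set \<Rightarrow> 'a set" where
  "ess V n v = interior v - \<Union>(overlapping_set V n)"

definition regular_graph :: "(nat \<Rightarrow> 'a::topological_space set set) \<Rightarrow> bool" where
  "regular_graph V \<longleftrightarrow>
     (\<forall>n. \<forall>v\<in>V n. v = \<Union>{w \<in> V (Suc n). w \<subseteq> v} \<and> ess V n v \<noteq> {})"

end

theory Submission
  imports Defs
begin

text \<open>A point z lies in an essential set of level n iff exactly one vertex of level n has z in
 its closure. Every path over z has z in the closures of all its ranges, and a path is determined
 by its ranges because \<open>V 0 = {Z}\<close>; so if z is essential at every level, the fibre over z is a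
 single path. Conversely, any vertex v whose closure contains z lies on a path over z: its
 ancestors contain v, and regularity provides below v a chain of descendants whose closures still
 contain z. Two distinct such vertices at one level thus give two distinct paths over z.\<close>

lemma closure_Union_finite:
  "finite A \<Longrightarrow> closure (\<Union>A) = \<Union>(closure ` A)"
  by (induction A rule: finite_induct) auto

lemma card_eq_1_iff_eq_singleton: "a \<in> A \<Longrightarrow> card A = 1 \<longleftrightarrow> A = {a}"
  by (auto simp: card_1_singleton_iff)

lemma Inter_closure_decseq_singleton:
  fixes S :: "nat \<Rightarrow> 'a::metric_space set"
  assumes cpt: "compact (UNIV :: 'a set)" and dec: "decseq S" and ne: "\<And>n. S n \<noteq> {}"
    and diam: "(\<lambda>n. diameter (S n)) \<longlonglongrightarrow> 0"
  shows "\<exists>a. (\<Inter>n. closure (S n)) = {a}"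
proof -
  have bdd: "bounded (T :: 'a set)" for T
    using compact_imp_bounded[OF cpt] bounded_subset by blast
  have "UNIV \<inter> (\<Inter>n\<in>UNIV. closure (S n)) \<noteq> {}"
  proof (rule compact_imp_fip_image[OF cpt])
    fix I :: "nat set" assume "finite I"
    then obtain N where "\<forall>n\<in>I. n \<le> N" using finite_nat_set_iff_bounded_le by blast
    moreover have "closure (S N) \<subseteq> closure (S n)" if "n \<le> N" for n
      using closure_mono[OF decseqD[OF dec that]] .
    ultimately have "closure (S N) \<subseteq> (\<Inter>n\<in>I. closure (S n))" by blast
    then show "UNIV \<inter> (\<Inter>n\<in>I. closure (S n)) \<noteq> {}" using ne[of N] by auto
  qed simp
  then obtain a where a: "a \<in> (\<Inter>n. closure (S n))" by auto
  have "b = a" if b: "b \<in> (\<Inter>n. closure (S n))" for b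
  proof -
    have "dist b a \<le> diameter (S n)" for n
      using diameter_bounded_bound[OF bdd, of b "closure (S n)" a] a b
        diameter_closure[OF bdd, of "S n"] by auto
    then have "dist b a \<le> 0" using LIMSEQ_le_const[OF diam] by blast
    then show ?thesis by simp
  qed
  then show ?thesis using a by blast
qed

lemma refining_sequenceD:
  assumes "refining_sequence V"
  shows "finite (V n)" "\<Union>(V n) = UNIV" "V 0 = {UNIV}"
    and "w \<in> V (Suc n) \<Longrightarrow> \<exists>v\<in>V n. w \<subseteq> v"
    and "(\<lambda>n. Max (diameter ` V n)) \<longlonglongrightarrow> 0"
proof -
  have "(\<forall>n. finite (V n) \<and> \<Union>(V n) = UNIV) \<and> V 0 = {UNIV}
      \<and> (\<forall>n. \<forall>w\<in>V (Suc n). \<exists>v\<in>V n. w \<subseteq> v) \<and> (\<lambda>n. Max (diameter ` V n)) \<longlonglongrightarrow> 0"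
    using assms unfolding refining_sequence_def by (elim conjE) (intro conjI; assumption)
  then show "finite (V n)" "\<Union>(V n) = UNIV" "V 0 = {UNIV}"
    and "w \<in> V (Suc n) \<Longrightarrow> \<exists>v\<in>V n. w \<subseteq> v"
    and "(\<lambda>n. Max (diameter ` V n)) \<longlonglongrightarrow> 0"
    by blast+
qed

lemma regular_graph_nonempty:
  "regular_graph V \<Longrightarrow> v \<in> V n \<Longrightarrow> v \<noteq> {}"
  unfolding regular_graph_def ess_def by fastforce

lemma regular_graph_child_closure:
  assumes "regular_graph V" "finite (V (Suc n))" "v \<in> V n" "z \<in> closure v"
  shows "\<exists>w\<in>V (Suc n). w \<subseteq> v \<and> z \<in> closure w"
proof -
  have "v = \<Union>{w \<in> V (Suc n). w \<subseteq> v}" using assms(1,3) unfolding regular_graph_def by blast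
  moreover have "finite {w \<in> V (Suc n). w \<subseteq> v}" using assms(2) by simp
  ultimately have "closure v = \<Union>(closure ` {w \<in> V (Suc n). w \<subseteq> v})"
    by (metis closure_Union_finite)
  then show ?thesis using assms(4) by blast
qed

lemma path_spaceD:
  assumes "p \<in> path_space V"
  shows "fst (p n) \<in> V n" "snd (p n) \<in> V (Suc n)" "snd (p n) \<subseteq> fst (p n)"
    and "fst (p (Suc n)) = snd (p n)"
  using assms unfolding path_space_def is_edge_def by auto

lemma path_space_of_vertices:
  assumes "\<And>k. r k \<in> V k" "\<And>k. r (Suc k) \<subseteq> r k"
  shows "(\<lambda>k. (r k, r (Suc k))) \<in> path_space V"
  using assms unfolding path_space_def is_edge_def by simp

lemma path_space_eqI:
  assumes "p \<in> path_space V" "q \<in> path_space V" "V 0 = {v\<^sub>0}"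
    and "\<And>n. snd (p n) = snd (q n)"
  shows "p = q"
proof
  fix n
  have "fst (p n) = fst (q n)"
  proof (cases n)
    case 0
    then show ?thesis
      using path_spaceD(1)[OF assms(1), of 0] path_spaceD(1)[OF assms(2), of 0] assms(3) by simp
  next
    case (Suc k)
    then show ?thesis using path_spaceD(4)[OF assms(1)] path_spaceD(4)[OF assms(2)] assms(4) by simp
  qed
  then show "p n = q n" using assms(4) by (simp add: prod_eq_iff)
qed

lemma Inter_closure_path_eq:
  fixes V :: "nat \<Rightarrow> 'a::metric_space set set"
  assumes cpt: "compact (UNIV :: 'a set)" and rs: "refining_sequence V"
    and reg: "regular_graph V" and p: "p \<in> path_space V"
  shows "(\<Inter>n. closure (snd (p n))) = {path_proj p}"
proof -
  have dec: "decseq (\<lambda>n. snd (p n))"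
    using path_spaceD(3,4)[OF p] by (intro decseq_SucI) metis
  have ne: "snd (p n) \<noteq> {}" for n
    using regular_graph_nonempty[OF reg path_spaceD(2)[OF p]] .
  have bound: "norm (diameter (snd (p n))) \<le> Max (diameter ` V (Suc n))" for n
  proof -
    have "bounded (snd (p n))" using compact_imp_bounded[OF cpt] bounded_subset by blast
    moreover have "diameter (snd (p n)) \<in> diameter ` V (Suc n)"
      using path_spaceD(2)[OF p] by (rule imageI)
    ultimately show ?thesis
      using Max_ge[OF finite_imageI[OF refining_sequenceD(1)[OF rs]]] by (simp add: diameter_ge_0)
  qed
  have "(\<lambda>n. diameter (snd (p n))) \<longlonglongrightarrow> 0"
    using Lim_null_comparison[OF always_eventually, OF allI, OF bound]
      LIMSEQ_Suc[OF refining_sequenceD(5)[OF rs]] .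
  then obtain a where a: "(\<Inter>n. closure (snd (p n))) = {a}"
    using Inter_closure_decseq_singleton[OF cpt dec ne] by blast
  then have "path_proj p = a" unfolding path_proj_def by auto
  then show ?thesis using a by simp
qed

lemma path_proj_mem_closure:
  fixes V :: "nat \<Rightarrow> 'a::metric_space set set"
  assumes "compact (UNIV :: 'a set)" "refining_sequence V" "regular_graph V" "p \<in> path_space V"
  shows "path_proj p \<in> closure (snd (p n))"
proof -
  have "path_proj p \<in> (\<Inter>n. closure (snd (p n)))" by (simp add: Inter_closure_path_eq[OF assms])
  then show ?thesis by blast
qed

lemma vertex_chain_extend_down:
  assumes rs: "refining_sequence V"
    and "\<And>k. m \<le> k \<Longrightarrow> r k \<in> V k \<and> r (Suc k) \<subseteq> r k"
  shows "\<exists>r'. (\<forall>k. r' k \<in> V k \<and> r' (Suc k) \<subseteq> r' k) \<and> (\<forall>k\<ge>m. r' k = r k)"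
  using assms(2)
proof (induction m arbitrary: r)
  case 0
  then show ?case by (intro exI[of _ r]) simp
next
  case (Suc m)
  have "r (Suc m) \<in> V (Suc m)" using Suc.prems by simp
  then obtain u where u: "u \<in> V m" "r (Suc m) \<subseteq> u"
    using refining_sequenceD(4)[OF rs] by blast
  have "(r(m := u)) k \<in> V k \<and> (r(m := u)) (Suc k) \<subseteq> (r(m := u)) k" if "m \<le> k" for k
    using that u Suc.prems[of k] by (cases "k = m") auto
  then obtain r' where r': "\<forall>k. r' k \<in> V k \<and> r' (Suc k) \<subseteq> r' k"
    and agree: "\<forall>k\<ge>m. r' k = (r(m := u)) k"
    using Suc.IH[of "r(m := u)"] by blast
  have "r' k = r k" if "Suc m \<le> k" for k
  proof -
    have "k \<noteq> m" "m \<le> k" using that by simp_all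
    then show ?thesis using agree by simp
  qed
  then show ?case using r' by (intro exI[of _ r']) simp
qed

lemma vertex_chain_down_through_closure:
  assumes rs: "refining_sequence V" and reg: "regular_graph V"
    and v: "v \<in> V m" and z: "z \<in> closure v"
  shows "\<exists>r. r m = v \<and> (\<forall>k\<ge>m. r k \<in> V k \<and> r (Suc k) \<subseteq> r k \<and> z \<in> closure (r k))"
proof -
  have "\<exists>t. \<forall>j. (t j \<in> V (m + j) \<and> z \<in> closure (t j) \<and> (j = 0 \<longrightarrow> t j = v))
      \<and> t (Suc j) \<subseteq> t j"
  proof (rule dependent_nat_choice)
    show "\<exists>x. x \<in> V (m + 0) \<and> z \<in> closure x \<and> (0 = 0 \<longrightarrow> x = v)"
      using v z by simp
  next
    fix x j assume x: "x \<in> V (m + j) \<and> z \<in> closure x \<and> (j = 0 \<longrightarrow> x = v)"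
    obtain y where "y \<in> V (Suc (m + j))" "y \<subseteq> x" "z \<in> closure y"
      using regular_graph_child_closure[OF reg refining_sequenceD(1)[OF rs]] x by meson
    then show "\<exists>y. (y \<in> V (m + Suc j) \<and> z \<in> closure y \<and> (Suc j = 0 \<longrightarrow> y = v)) \<and> y \<subseteq> x"
      by auto
  qed
  then obtain t where t: "\<forall>j. (t j \<in> V (m + j) \<and> z \<in> closure (t j) \<and> (j = 0 \<longrightarrow> t j = v))
      \<and> t (Suc j) \<subseteq> t j" ..
  define r where "r k = t (k - m)" for k
  have "r k \<in> V k \<and> r (Suc k) \<subseteq> r k \<and> z \<in> closure (r k)" if "m \<le> k" for k
  proof -
    have "m + (k - m) = k" "Suc k - m = Suc (k - m)" using that by simp_all
    then show ?thesis using t[rule_format, of "k - m"] unfolding r_def by simp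
  qed
  moreover have "r m = v" using t unfolding r_def by simp
  ultimately show ?thesis by (intro exI[of _ r]) blast
qed

lemma path_through_closure:
  fixes V :: "nat \<Rightarrow> 'a::metric_space set set"
  assumes cpt: "compact (UNIV :: 'a set)" and rs: "refining_sequence V"
    and reg: "regular_graph V" and v: "v \<in> V m" and z: "z \<in> closure v"
  shows "\<exists>q\<in>path_space V. path_proj q = z \<and> fst (q m) = v"
proof -
  obtain r where r: "r m = v" "\<forall>k\<ge>m. r k \<in> V k \<and> r (Suc k) \<subseteq> r k \<and> z \<in> closure (r k)"
    using vertex_chain_down_through_closure[OF rs reg v z] by blast
  then have "r k \<in> V k \<and> r (Suc k) \<subseteq> r k" if "m \<le> k" for k
    using that by simp
  then obtain r' where r': "\<forall>k. r' k \<in> V k \<and> r' (Suc k) \<subseteq> r' k" "\<forall>k\<ge>m. r' k = r k"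
    using vertex_chain_extend_down[OF rs] by blast
  have z_r': "z \<in> closure (r' k)" for k
  proof (cases "m \<le> k")
    case True
    then show ?thesis using r(2) r'(2) by simp
  next
    case False
    have "decseq r'" using r'(1) by (intro decseq_SucI) simp
    then have "r' m \<subseteq> r' k" using False by (simp add: decseqD)
    then have "v \<subseteq> r' k" using r(1) r'(2) by simp
    then show ?thesis using z closure_mono by blast
  qed
  define q where "q k = (r' k, r' (Suc k))" for k
  have q: "q \<in> path_space V" unfolding q_def
    by (rule path_space_of_vertices) (use r'(1) in simp_all)
  have "z \<in> (\<Inter>n. closure (snd (q n)))" using z_r' unfolding q_def by simp
  then have "path_proj q = z" using Inter_closure_path_eq[OF cpt rs reg q] by simp
  moreover have "fst (q m) = v" using r(1) r'(2) unfolding q_def by simp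
  ultimately show ?thesis using q by blast
qed

lemma Union_overlapping_set:
  "\<Union>(overlapping_set V n) = {z. \<exists>v\<in>V n. \<exists>w\<in>V n. v \<noteq> w \<and> z \<in> closure v \<and> z \<in> closure w}"
  unfolding overlapping_set_def by blast

lemma mem_ess_iff_unique_closure:
  assumes fin: "finite (V n)" and cover: "\<Union>(V n) = UNIV"
  shows "z \<in> (\<Union>v\<in>V n. ess V n v) \<longleftrightarrow> (\<exists>!v\<in>V n. z \<in> closure v)"
proof
  assume "z \<in> (\<Union>v\<in>V n. ess V n v)"
  then obtain v where v: "v \<in> V n" "z \<in> interior v" "z \<notin> \<Union>(overlapping_set V n)"
    unfolding ess_def by blast
  have "z \<in> closure v" using v(2) interior_subset closure_subset by blast
  moreover have "w = v" if "w \<in> V n" "z \<in> closure w" for w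
    using v(1,3) \<open>z \<in> closure v\<close> that unfolding Union_overlapping_set by blast
  ultimately show "\<exists>!v\<in>V n. z \<in> closure v" using v(1) by blast
next
  assume "\<exists>!v\<in>V n. z \<in> closure v"
  then obtain u where unique: "\<And>w. w \<in> V n \<Longrightarrow> z \<in> closure w \<Longrightarrow> w = u"
    by blast
  have "z \<in> \<Union>(V n)" using cover by simp
  then obtain v where v: "v \<in> V n" "z \<in> v" by blast
  then have "v = u" using unique closure_subset by blast
  have "z \<in> interior v"
  proof (rule ccontr)
    assume "z \<notin> interior v"
    then have "z \<in> closure (- v)" by (simp add: closure_interior)
    moreover have "- v \<subseteq> \<Union>(V n - {v})"
    proof
      fix x assume "x \<in> - v"
      moreover have "x \<in> \<Union>(V n)" using cover by simp
      ultimately show "x \<in> \<Union>(V n - {v})" by blast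
    qed
    then have "closure (- v) \<subseteq> closure (\<Union>(V n - {v}))" by (rule closure_mono)
    ultimately have "z \<in> closure (\<Union>(V n - {v}))" by blast
    then obtain w where "w \<in> V n - {v}" "z \<in> closure w"
      using fin by (auto simp: closure_Union_finite)
    then show False using unique \<open>v = u\<close> by blast
  qed
  moreover have "z \<notin> \<Union>(overlapping_set V n)"
    using unique unfolding Union_overlapping_set by blast
  ultimately show "z \<in> (\<Union>v\<in>V n. ess V n v)" using v(1) unfolding ess_def by blast
qed

lemma path_fiber_eq_singleton_iff:
  fixes V :: "nat \<Rightarrow> 'a::metric_space set set"
  assumes cpt: "compact (UNIV :: 'a set)" and rs: "refining_sequence V"
    and reg: "regular_graph V" and p: "p \<in> path_space V"
  shows "{q \<in> path_space V. path_proj q = path_proj p} = {p}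
    \<longleftrightarrow> (\<forall>n. \<exists>!v\<in>V n. path_proj p \<in> closure v)"
proof
  assume fiber: "{q \<in> path_space V. path_proj q = path_proj p} = {p}"
  have in_fiber: "q = p" if "q \<in> path_space V" "path_proj q = path_proj p" for q
  proof -
    have "q \<in> {q \<in> path_space V. path_proj q = path_proj p}" using that by simp
    then show ?thesis unfolding fiber by simp
  qed
  show "\<forall>n. \<exists>!v\<in>V n. path_proj p \<in> closure v"
  proof
    fix n
    have "path_proj p \<in> \<Union>(V n)" using refining_sequenceD(2)[OF rs] by simp
    then obtain v where v: "v \<in> V n" "path_proj p \<in> closure v"
      using closure_subset by blast
    have "a = b"
      if ab: "a \<in> V n" "b \<in> V n" "path_proj p \<in> closure a" "path_proj p \<in> closure b" for a b
    proof -
      obtain qa where "qa \<in> path_space V" "path_proj qa = path_proj p" "fst (qa n) = a"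
        using path_through_closure[OF cpt rs reg ab(1,3)] by blast
      moreover obtain qb where "qb \<in> path_space V" "path_proj qb = path_proj p" "fst (qb n) = b"
        using path_through_closure[OF cpt rs reg ab(2,4)] by blast
      ultimately show "a = b" using in_fiber by metis
    qed
    then show "\<exists>!v\<in>V n. path_proj p \<in> closure v"
      using v by (intro ex1I[of _ v]) auto
  qed
next
  assume unique: "\<forall>n. \<exists>!v\<in>V n. path_proj p \<in> closure v"
  have "q = p" if q: "q \<in> path_space V" "path_proj q = path_proj p" for q
  proof (rule path_space_eqI[OF q(1) p refining_sequenceD(3)[OF rs]])
    fix n
    have "path_proj p \<in> closure (snd (q n))"
      using path_proj_mem_closure[OF cpt rs reg q(1)] q(2) by simp
    moreover have "path_proj p \<in> closure (snd (p n))"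
      using path_proj_mem_closure[OF cpt rs reg p] .
    ultimately show "snd (q n) = snd (p n)"
      using unique[rule_format, of "Suc n"] path_spaceD(2)[OF q(1), of n] path_spaceD(2)[OF p, of n]
      by blast
  qed
  then show "{q \<in> path_space V. path_proj q = path_proj p} = {p}" using p by auto
qed

theorem proposition2p22:
  fixes V :: "nat \<Rightarrow> 'a::metric_space set set"
  assumes "compact (UNIV :: 'a set)"
    and "infinite (UNIV :: 'a set)"
    and "refining_sequence V"
    and "regular_graph V"
  shows "injectivity_set V =
           {p \<in> path_space V. path_proj p \<in> (\<Inter>n. \<Union>v\<in>V n. ess V n v)}"
proof -
  note cpt = assms(1) and rs = assms(3) and reg = assms(4)
  have "p \<in> injectivity_set V \<longleftrightarrow>
      p \<in> path_space V \<and> (\<forall>n. path_proj p \<in> (\<Union>v\<in>V n. ess V n v))" for p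
  proof (cases "p \<in> path_space V")
    case False
    then show ?thesis unfolding injectivity_set_def by simp
  next
    case p: True
    have "p \<in> injectivity_set V \<longleftrightarrow> card {q \<in> path_space V. path_proj q = path_proj p} = 1"
      using p unfolding injectivity_set_def by simp
    also have "\<dots> \<longleftrightarrow> {q \<in> path_space V. path_proj q = path_proj p} = {p}"
      using p by (intro card_eq_1_iff_eq_singleton) simp
    also have "\<dots> \<longleftrightarrow> (\<forall>n. \<exists>!v\<in>V n. path_proj p \<in> closure v)"
      by (rule path_fiber_eq_singleton_iff[OF cpt rs reg p])
    also have "\<dots> \<longleftrightarrow> (\<forall>n. path_proj p \<in> (\<Union>v\<in>V n. ess V n v))"
      using mem_ess_iff_unique_closure[of V, OF refining_sequenceD(1,2)[OF rs]] by simp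
    finally show ?thesis using p by simp
  qed
  then show ?thesis by (simp add: set_eq_iff)
qed

end
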